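(* Let $F$ be a distribution function on $[0,1]$ with a positive, non-increasing, differentiable density $g$ and non-decreasing hazard ratio $g(x)/(1-F(x))$. Let $\{f_{i,j}\}$, $f_{i,j}=f_{j,i}$ ($1\le i\le j\le n$), be independent with distribution $F$. For $I\subseteq[n]$ with $|I|=r$, let $\mathcal D_I$ be the event that $f_{i,j}\ge (f_{i,i}+f_{j,j})/2$ for all distinct $i,j\in I$ and no subset $J\subsetneq I$ with $|J|\ge2$ supports a non-trivial local equilibrium, where $J$ supports a non-trivial local equilibrium if there exist $p_j>0$ ($j\in J$), $\sum_{j\in J}p_j=1$, such that $\sum_{j\in J}f_{i,j}p_j$ is constant in $i\in J$ and $\sum_{i,j\in J}f_{i,j}x_ix_j\le0$ whenever $\sum_{i\in J}x_i=0$. Then there exist constants $\eta_1^*,\eta_2^*$ such that \[ \mathrm{P}(\mathcal D_I)\le 2^{-\frac32 r^2}\exp\bigl(\eta_1^*r\log r+\eta_2^*r+O(\log r)\bigr). \] *)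

theory Defs
  imports "HOL-Probability.Probability"
begin

definition pairs :: "nat \<Rightarrow> (nat \<times> nat) set" where
  "pairs n = {(i, j). 1 \<le> i \<and> i \<le> j \<and> j \<le> n}"

definition dist_meas :: "(real \<Rightarrow> real) \<Rightarrow> real measure" where
  "dist_meas g = density lborel (\<lambda>x. ennreal (indicator {0..1} x * g x))"

definition cdf :: "(real \<Rightarrow> real) \<Rightarrow> real \<Rightarrow> real" where
  "cdf g x = integral {0..x} g"

definition sym_entry :: "(nat \<times> nat \<Rightarrow> real) \<Rightarrow> nat \<Rightarrow> nat \<Rightarrow> real" where
  "sym_entry \<omega> i j = \<omega> (min i j, max i j)"

definition supports_local_eq :: "(nat \<Rightarrow> nat \<Rightarrow> real) \<Rightarrow> nat set \<Rightarrow> bool" where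
  "supports_local_eq f J \<longleftrightarrow>
     (\<exists>p :: nat \<Rightarrow> real. (\<forall>j\<in>J. p j > 0) \<and> (\<Sum>j\<in>J. p j) = 1 \<and>
        (\<exists>c. \<forall>i\<in>J. (\<Sum>j\<in>J. f i j * p j) = c) \<and>
        (\<forall>x :: nat \<Rightarrow> real. (\<Sum>i\<in>J. x i) = 0 \<longrightarrow>
            (\<Sum>i\<in>J. \<Sum>j\<in>J. f i j * x i * x j) \<le> 0))"

definition event_D :: "(nat \<Rightarrow> nat \<Rightarrow> real) \<Rightarrow> nat set \<Rightarrow> bool" where
  "event_D f I \<longleftrightarrow>
     (\<forall>i\<in>I. \<forall>j\<in>I. i \<noteq> j \<longrightarrow> f i j \<ge> (f i i + f j j) / 2) \<and>
     \<not> (\<exists>J. J \<subset> I \<and> card J \<ge> 2 \<and> supports_local_eq f J)"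

end

(*
  On D_I with |I| >= 3 every off-diagonal entry f_ij lies in the window
  [(f_ii + f_jj)/2, max f_ii f_jj]: the lower bound is part of D_I, and an entry above both
  diagonal entries would make {i, j} a proper subset supporting a local equilibrium.
  Given the diagonal, the off-diagonal entries are independent, and since the density is
  non-increasing each window has probability at most |F(f_ii) - F(f_jj)|/2.

  For r points u_i of [0, 1] the product of the |u_i - u_j| over all pairs is at most
  prod_{m<r} 2(m+1)/4^m: some point has product of distances to the other m points at most
  2(m+1)/4^m, for otherwise the Lagrange interpolation formula would make the leading
  coefficient 4^m/2 of the degree-m shifted Chebyshev polynomial, which is bounded by 1 on
  [0, 1], too small; remove that point and induct.

  Altogether P(D_I) <= r! 2^(r - 3r(r-1)/2), which is the claim with eta1 = 1, eta2 = 3 and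
  no logarithmic term.
*)

theory Submission
  imports Defs "HOL-Computational_Algebra.Polynomial"
begin

section \<open>Shifted Chebyshev polynomials and interpolation\<close>

fun shifted_chebyshev :: "nat \<Rightarrow> real poly" where
  "shifted_chebyshev 0 = 1"
| "shifted_chebyshev (Suc 0) = [:-1, 2:]"
| "shifted_chebyshev (Suc (Suc n)) =
     smult 2 ([:-1, 2:] * shifted_chebyshev (Suc n)) - shifted_chebyshev n"

lemma poly_shifted_chebyshev_cos:
  "poly (shifted_chebyshev n) ((1 + cos t) / 2) = cos (real n * t)"
proof (induction n rule: shifted_chebyshev.induct)
  case (3 n)
  let ?s = "real (Suc n) * t"
  have "poly (shifted_chebyshev (Suc (Suc n))) ((1 + cos t) / 2)
        = 2 * cos t * cos ?s - cos (?s - t)"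
    using 3 by (simp add: algebra_simps)
  also have "\<dots> = cos (?s + t)"
    by (simp add: cos_add cos_diff)
  finally show ?case by (simp add: distrib_right)
qed (simp_all add: field_simps)

lemma abs_poly_shifted_chebyshev_le:
  assumes "0 \<le> x" "x \<le> 1"
  shows "\<bar>poly (shifted_chebyshev n) x\<bar> \<le> 1"
proof -
  have "x = (1 + cos (arccos (2 * x - 1))) / 2"
    using assms by (simp add: cos_arccos)
  then show ?thesis
    by (metis poly_shifted_chebyshev_cos abs_cos_le_one)
qed

lemma degree_shifted_chebyshev_le: "degree (shifted_chebyshev n) \<le> n"
proof (induction n rule: shifted_chebyshev.induct)
  case (3 n)
  have "degree ([:-1, 2:] * shifted_chebyshev (Suc n)) \<le> Suc (Suc n)"
    using degree_mult_le[of "[:-1, 2:]" "shifted_chebyshev (Suc n)"] 3 by simp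
  then show ?case
    using 3 by (auto intro!: degree_diff_le order.trans[OF degree_smult_le])
qed simp_all

lemma coeff_shifted_chebyshev:
  "coeff (shifted_chebyshev (Suc n)) (Suc n) = 2 * 4 ^ n"
proof (induction n)
  case (Suc m)
  let ?p = "shifted_chebyshev (Suc m)"
  have "coeff ?p (Suc (Suc m)) = 0" "coeff (shifted_chebyshev m) (Suc (Suc m)) = 0"
    using degree_shifted_chebyshev_le[of "Suc m"] degree_shifted_chebyshev_le[of m]
    by (auto intro: coeff_eq_0)
  then have "coeff (shifted_chebyshev (Suc (Suc m))) (Suc (Suc m)) = 4 * coeff ?p (Suc m)"
    by (simp add: mult_pCons_left)
  then show ?case using Suc.IH by simp
qed simp

lemma coeff_eq_Lagrange_sum:
  fixes u :: "'a \<Rightarrow> real" and P :: "real poly"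
  assumes fin: "finite K" and inj: "inj_on u K" and card: "card K = Suc m"
    and deg: "degree P \<le> m"
  shows "coeff P m = (\<Sum>k\<in>K. poly P (u k) / (\<Prod>j\<in>K - {k}. (u k - u j)))"
proof -
  define D where "D k = (\<Prod>j\<in>K - {k}. (u k - u j))" for k
  define B where "B k = (\<Prod>j\<in>K - {k}. [:- u j, 1:])" for k
  define L where "L = (\<Sum>k\<in>K. smult (poly P (u k) / D k) (B k))"
  have D_nonzero: "D k \<noteq> 0" if "k \<in> K" for k
    unfolding D_def using fin inj that by (auto simp: inj_on_def)
  have poly_B: "poly (B k) x = (\<Prod>j\<in>K - {k}. (x - u j))" for k x
    unfolding B_def by (simp add: poly_prod)
  have degree_B: "degree (B k) = m" and coeff_B: "coeff (B k) m = 1" if "k \<in> K" for k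
  proof -
    have "degree (B k) = card (K - {k})"
      unfolding B_def by (subst degree_prod_eq_sum_degree) auto
    then show "degree (B k) = m" using card fin that by simp
    moreover have "lead_coeff (B k) = 1" unfolding B_def lead_coeff_prod by simp
    ultimately show "coeff (B k) m = 1" by simp
  qed
  have "degree L \<le> m"
    unfolding L_def using fin degree_B
    by (intro degree_sum_le) (auto intro: order.trans[OF degree_smult_le])
  moreover have "poly L (u i) = poly P (u i)" if i: "i \<in> K" for i
  proof -
    have "poly (B k) (u i) = 0" if "k \<in> K - {i}" for k
      using that fin i by (auto simp: poly_B prod_zero_iff)
    then have "poly L (u i) = poly P (u i) / D i * poly (B i) (u i)"
      unfolding L_def poly_sum poly_smult using fin i by (simp add: sum.remove)
    then show ?thesis using D_nonzero[OF i] by (simp add: poly_B D_def)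
  qed
  ultimately have "P = L"
    using deg card card_image[OF inj]
    by (intro poly_eqI_degree[of "u ` K"]) auto
  then have "coeff P m = coeff L m" by simp
  also have "\<dots> = (\<Sum>k\<in>K. poly P (u k) / D k * coeff (B k) m)"
    unfolding L_def by (simp only: coeff_sum coeff_smult)
  also have "\<dots> = (\<Sum>k\<in>K. poly P (u k) / D k)"
    by (rule sum.cong) (simp_all add: coeff_B)
  finally show ?thesis by (simp add: D_def)
qed

section \<open>Products of pairwise distances\<close>

lemma exists_small_node_product:
  fixes u :: "'a \<Rightarrow> real"
  assumes fin: "finite K" and inj: "inj_on u K" and card: "card K = Suc m"
    and range: "u ` K \<subseteq> {0..1}"
  shows "\<exists>k\<in>K. \<bar>\<Prod>j\<in>K - {k}. (u k - u j)\<bar> \<le> 2 * real (Suc m) / 4 ^ m"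
proof (rule ccontr)
  assume "\<not> ?thesis"
  then have big: "2 * real (Suc m) / 4 ^ m < \<bar>\<Prod>j\<in>K - {k}. (u k - u j)\<bar>" if "k \<in> K" for k
    using that by force
  have lead: "4 ^ m / 2 \<le> coeff (shifted_chebyshev m) m"
    by (cases m) (simp_all add: coeff_shifted_chebyshev)
  have "coeff (shifted_chebyshev m) m
          = (\<Sum>k\<in>K. poly (shifted_chebyshev m) (u k) / (\<Prod>j\<in>K - {k}. (u k - u j)))"
    by (rule coeff_eq_Lagrange_sum[OF fin inj card degree_shifted_chebyshev_le])
  also have "\<dots> < (\<Sum>k\<in>K. 4 ^ m / (2 * real (Suc m)))"
  proof (rule sum_strict_mono[OF fin])
    show "K \<noteq> {}" using card by auto
  next
    fix k assume k: "k \<in> K"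
    let ?d = "\<bar>\<Prod>j\<in>K - {k}. (u k - u j)\<bar>"
    have "poly (shifted_chebyshev m) (u k) / (\<Prod>j\<in>K - {k}. (u k - u j))
            \<le> \<bar>poly (shifted_chebyshev m) (u k)\<bar> / ?d"
      by (metis abs_divide abs_ge_self)
    also have "\<dots> \<le> 1 / ?d"
      using range k by (intro divide_right_mono abs_poly_shifted_chebyshev_le) auto
    also have "1 / ?d < 1 / (2 * real (Suc m) / 4 ^ m)"
    proof (rule divide_strict_left_mono[OF big[OF k]])
      have "0 < 2 * real (Suc m) / 4 ^ m" by simp
      with big[OF k] show "0 < ?d * (2 * real (Suc m) / 4 ^ m)"
        by (intro mult_pos_pos) linarith+
    qed simp
    also have "\<dots> = 4 ^ m / (2 * real (Suc m))" by simp
    finally show "poly (shifted_chebyshev m) (u k) / (\<Prod>j\<in>K - {k}. (u k - u j))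
                    < 4 ^ m / (2 * real (Suc m))" .
  qed
  also have "\<dots> = 4 ^ m / 2"
    using card by (simp add: field_simps)
  finally show False using lead by simp
qed

definition less_pairs :: "'a::linorder set \<Rightarrow> ('a \<times> 'a) set" where
  "less_pairs K = {(i, j). i \<in> K \<and> j \<in> K \<and> i < j}"

lemma finite_less_pairs: "finite K \<Longrightarrow> finite (less_pairs K)"
  by (rule finite_subset[of _ "K \<times> K"]) (auto simp: less_pairs_def)

lemma prod_less_pairs_insert:
  assumes "finite K" "k \<notin> K"
  shows "(\<Prod>p\<in>less_pairs (insert k K). h p)
           = (\<Prod>p\<in>less_pairs K. h p) * (\<Prod>j\<in>K. h (min k j, max k j))"
proof -
  let ?e = "\<lambda>j. (min k j, max k j)"
  have split: "less_pairs (insert k K) = less_pairs K \<union> ?e ` K"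
  proof (intro equalityI subsetI)
    fix p assume "p \<in> less_pairs (insert k K)"
    then obtain a b where "p = (a, b)" "a \<in> insert k K" "b \<in> insert k K" "a < b"
      by (auto simp: less_pairs_def)
    note ab = this
    consider "a = k" | "b = k" | "a \<noteq> k" "b \<noteq> k" by blast
    then show "p \<in> less_pairs K \<union> ?e ` K"
    proof cases
      case 1
      with ab have "p = ?e b" "b \<in> K" by auto
      then show ?thesis by blast
    next
      case 2
      with ab have "p = ?e a" "a \<in> K" by auto
      then show ?thesis by blast
    qed (use ab in \<open>auto simp: less_pairs_def\<close>)
  next
    fix p assume "p \<in> less_pairs K \<union> ?e ` K"
    then show "p \<in> less_pairs (insert k K)"
      using assms by (auto simp: less_pairs_def min_def max_def le_less split: if_splits)
  qed
  have "inj_on ?e K"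
    using assms by (auto simp: inj_on_def min_def max_def split: if_splits)
  moreover have "less_pairs K \<inter> ?e ` K = {}"
    using assms by (auto simp: less_pairs_def min_def max_def split: if_splits)
  ultimately show ?thesis
    unfolding split using assms
    by (subst prod.union_disjoint) (auto simp: finite_less_pairs prod.reindex)
qed

lemma prod_less_pairs_dist_le:
  fixes u :: "'a::linorder \<Rightarrow> real"
  assumes "finite K" "u ` K \<subseteq> {0..1}"
  shows "(\<Prod>p\<in>less_pairs K. \<bar>u (fst p) - u (snd p)\<bar> / 2)
           \<le> (\<Prod>m<card K. 2 * real (Suc m) / 8 ^ m)"
  using assms
proof (induction "card K" arbitrary: K)
  case 0
  then show ?case by (simp add: less_pairs_def)
next
  case (Suc m K)
  have bound_nonneg: "0 \<le> (\<Prod>m<card K. 2 * real (Suc m) / 8 ^ m)"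
    by (rule prod_nonneg) simp
  show ?case
  proof (cases "inj_on u K")
    case False
    then obtain i j where "i \<in> K" "j \<in> K" "i \<noteq> j" "u i = u j"
      by (auto simp: inj_on_def)
    then have "(min i j, max i j) \<in> less_pairs K" "u (min i j) = u (max i j)"
      by (auto simp: less_pairs_def min_def max_def)
    then have "(\<Prod>p\<in>less_pairs K. \<bar>u (fst p) - u (snd p)\<bar> / 2) = 0"
      by (intro prod_zero finite_less_pairs Suc.prems(1) bexI[of _ "(min i j, max i j)"]) auto
    then show ?thesis using bound_nonneg by simp
  next
    case True
    obtain k where k: "k \<in> K"
      and small: "\<bar>\<Prod>j\<in>K - {k}. (u k - u j)\<bar> \<le> 2 * real (Suc m) / 4 ^ m"
      using exists_small_node_product[OF Suc.prems(1) True Suc.hyps(2)[symmetric] Suc.prems(2)]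
      by blast
    let ?K = "K - {k}"
    have "card ?K = m" using Suc.hyps(2) Suc.prems(1) k by simp
    then have IH: "(\<Prod>p\<in>less_pairs ?K. \<bar>u (fst p) - u (snd p)\<bar> / 2)
                     \<le> (\<Prod>m<m. 2 * real (Suc m) / 8 ^ m)"
      using Suc.hyps(1)[of ?K] Suc.prems by auto
    have "(\<Prod>j\<in>?K. \<bar>u (min k j) - u (max k j)\<bar> / 2) = (\<Prod>j\<in>?K. \<bar>u k - u j\<bar> / 2)"
      by (rule prod.cong) (auto simp: min_def max_def abs_minus_commute)
    also have "\<dots> = \<bar>\<Prod>j\<in>?K. (u k - u j)\<bar> / 2 ^ m"
      using \<open>card ?K = m\<close> by (simp add: abs_prod prod_dividef)
    also have "\<dots> \<le> 2 * real (Suc m) / 8 ^ m"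
      using divide_right_mono[OF small, of "2 ^ m"]
      by (simp add: power_mult_distrib[symmetric])
    finally have new: "(\<Prod>j\<in>?K. \<bar>u (min k j) - u (max k j)\<bar> / 2) \<le> 2 * real (Suc m) / 8 ^ m" .
    have "(\<Prod>p\<in>less_pairs K. \<bar>u (fst p) - u (snd p)\<bar> / 2)
        = (\<Prod>p\<in>less_pairs ?K. \<bar>u (fst p) - u (snd p)\<bar> / 2)
            * (\<Prod>j\<in>?K. \<bar>u (min k j) - u (max k j)\<bar> / 2)"
      using prod_less_pairs_insert[of ?K k "\<lambda>p. \<bar>u (fst p) - u (snd p)\<bar> / 2"] Suc.prems(1)
      by (simp add: insert_absorb[OF k])
    also have "\<dots> \<le> (\<Prod>m<m. 2 * real (Suc m) / 8 ^ m) * (2 * real (Suc m) / 8 ^ m)"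
      using IH new by (intro mult_mono) (auto intro: prod_nonneg)
    also have "\<dots> = (\<Prod>m<card K. 2 * real (Suc m) / 8 ^ m)"
      unfolding Suc.hyps(2)[symmetric] by simp
    finally show ?thesis .
  qed
qed

lemma prod_vandermonde_bound_eq:
  "(\<Prod>m<r. 2 * real (Suc m) / 8 ^ m) = fact r * 2 powr (real r - 3/2 * real r * (real r - 1))"
proof (induction r)
  case (Suc r)
  have "(8::real) ^ r = 2 ^ (3 * r)" by (simp add: power_mult)
  then have eight: "(8::real) ^ r = 2 powr (3 * real r)" by (simp add: powr_realpow[symmetric])
  have "real (Suc r) - 3/2 * real (Suc r) * (real (Suc r) - 1)
          = (real r - 3/2 * real r * (real r - 1)) + 1 - 3 * real r"
    by (simp add: field_simps)
  then have "2 powr (real (Suc r) - 3/2 * real (Suc r) * (real (Suc r) - 1))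
               = 2 powr (real r - 3/2 * real r * (real r - 1)) * 2 / 8 ^ r"
    by (simp only: eight powr_add powr_diff powr_one)
  then show ?case
    using Suc by (simp add: field_simps)
qed simp

lemma prod_vandermonde_bound_le:
  assumes "r > 0"
  shows "(\<Prod>m<r. 2 * real (Suc m) / 8 ^ m)
           \<le> 2 powr (- (3/2) * (real r)\<^sup>2) * exp (real r * ln (real r) + 3 * real r)"
proof -
  have "(fact r :: real) \<le> real (r ^ r)" by (rule fact_le_power)
  also have "\<dots> = exp (real r * ln (real r))"
    using assms by (simp add: exp_of_nat_mult)
  finally have fact_le: "fact r \<le> exp (real r * ln (real r))" .
  have "real r - 3/2 * real r * (real r - 1) = - (3/2) * (real r)\<^sup>2 + 5/2 * real r"
    by (simp add: power2_eq_square field_simps)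
  then have "2 powr (real r - 3/2 * real r * (real r - 1))
               = 2 powr (- (3/2) * (real r)\<^sup>2) * 2 powr (5/2 * real r)"
    by (simp only: powr_add)
  also have "2 powr (5/2 * real r) = exp (5/2 * real r * ln 2)"
    by (simp add: powr_def)
  also have "\<dots> \<le> exp (3 * real r)"
  proof -
    have "5/2 * real r * ln 2 \<le> 5/2 * real r * 1"
      using ln_2_less_1 by (intro mult_left_mono) auto
    then show ?thesis by simp
  qed
  finally show ?thesis
    unfolding prod_vandermonde_bound_eq exp_add
    using fact_le by (simp add: mult_mono mult.left_commute)
qed

section \<open>The window event\<close>

definition window :: "(nat \<times> nat \<Rightarrow> real) \<Rightarrow> nat \<times> nat \<Rightarrow> real set" where
  "window \<omega> p = {(\<omega> (fst p, fst p) + \<omega> (snd p, snd p)) / 2 ..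
                   max (\<omega> (fst p, fst p)) (\<omega> (snd p, snd p))}"

lemma measurable_component_dist_meas:
  "q \<in> T \<Longrightarrow> (\<lambda>\<omega>. \<omega> q) \<in> borel_measurable (PiM T (\<lambda>_. dist_meas g))"
  using measurable_component_singleton[of q T "\<lambda>_. dist_meas g"]
  by (simp add: dist_meas_def cong: measurable_cong_sets)

lemma measurable_window_indicator:
  assumes "\<And>p. p \<in> Q \<Longrightarrow> p \<in> T \<and> (fst p, fst p) \<in> T \<and> (snd p, snd p) \<in> T"
  shows "(\<lambda>\<omega>. \<Prod>p\<in>Q. indicator (window \<omega> p) (\<omega> p) :: ennreal)
           \<in> borel_measurable (PiM T (\<lambda>_. dist_meas g))"
proof (rule borel_measurable_prod_ennreal)
  fix p assume "p \<in> Q"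
  let ?M = "PiM T (\<lambda>_. dist_meas g)"
  have entries: "(\<lambda>\<omega>. \<omega> p) \<in> borel_measurable ?M"
      "(\<lambda>\<omega>. \<omega> (fst p, fst p)) \<in> borel_measurable ?M"
      "(\<lambda>\<omega>. \<omega> (snd p, snd p)) \<in> borel_measurable ?M"
    using assms[OF \<open>p \<in> Q\<close>] by (auto intro: measurable_component_dist_meas)
  have "Measurable.pred ?M (\<lambda>\<omega>. (\<omega> (fst p, fst p) + \<omega> (snd p, snd p)) / 2 \<le> \<omega> p)"
    unfolding pred_def using entries
    by (intro borel_measurable_le borel_measurable_divide borel_measurable_add) auto
  moreover have "Measurable.pred ?M (\<lambda>\<omega>. \<omega> p \<le> max (\<omega> (fst p, fst p)) (\<omega> (snd p, snd p)))"
    unfolding pred_def using entries by (intro borel_measurable_le borel_measurable_max) auto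
  ultimately have [measurable]: "Measurable.pred ?M (\<lambda>\<omega>. \<omega> p \<in> window \<omega> p)"
    unfolding window_def by (simp add: pred_intros_logic)
  show "(\<lambda>\<omega>. indicator (window \<omega> p) (\<omega> p) :: ennreal) \<in> borel_measurable ?M"
    unfolding indicator_def by measurable
qed

lemma supports_local_eq_pair:
  assumes "i \<noteq> j" "f j i = f i j" "f i i < f i j" "f j j < f i j"
  shows "supports_local_eq f {i, j}"
proof -
  define a b c where "a = f i i" and "b = f j j" and "c = f i j"
  define d where "d = 2 * c - a - b"
  have "d > 0" using assms by (simp add: d_def a_def b_def c_def)
  define p where "p k = (if k = i then (c - b) / d else (c - a) / d)" for k
  have p: "p i = (c - b) / d" "p j = (c - a) / d" using assms(1) by (simp_all add: p_def)
  have f: "f i i = a" "f j j = b" "f i j = c" "f j i = c"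
    using assms(2) by (simp_all add: a_def b_def c_def)
  show ?thesis
    unfolding supports_local_eq_def
  proof (intro exI conjI ballI allI impI)
    fix k assume "k \<in> {i, j}"
    then show "0 < p k"
      using assms \<open>d > 0\<close> by (auto simp: p_def a_def b_def c_def)
  next
    show "(\<Sum>k\<in>{i, j}. p k) = 1"
      using assms(1) \<open>d > 0\<close> by (simp add: p add_divide_distrib[symmetric] d_def)
  next
    fix k assume "k \<in> {i, j}"
    then show "(\<Sum>l\<in>{i, j}. f k l * p l) = a * p i + c * p j"
      using assms(1) \<open>d > 0\<close> by (auto simp: f p field_simps d_def)
  next
    fix x :: "nat \<Rightarrow> real" assume "(\<Sum>k\<in>{i, j}. x k) = 0"
    then have "x j = - x i" using assms(1) by simp
    then have "(\<Sum>k\<in>{i, j}. \<Sum>l\<in>{i, j}. f k l * x k * x l) = - d * (x i)\<^sup>2"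
      using assms(1) by (simp add: f d_def power2_eq_square algebra_simps)
    also have "\<dots> \<le> 0" using \<open>d > 0\<close> by simp
    finally show "(\<Sum>k\<in>{i, j}. \<Sum>l\<in>{i, j}. f k l * x k * x l) \<le> 0" .
  qed
qed

lemma event_D_imp_window:
  assumes D: "event_D (sym_entry \<omega>) I" and card: "card I \<ge> 3" and p: "p \<in> less_pairs I"
  shows "\<omega> p \<in> window \<omega> p"
proof -
  obtain i j where ij: "p = (i, j)" "i \<in> I" "j \<in> I" "i < j"
    using p by (auto simp: less_pairs_def)
  let ?f = "sym_entry \<omega>"
  have f: "?f i j = \<omega> (i, j)" "?f j i = \<omega> (i, j)" "?f i i = \<omega> (i, i)" "?f j j = \<omega> (j, j)"
    using ij by (auto simp: sym_entry_def)
  have "\<not> supports_local_eq ?f {i, j}"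
  proof -
    have "finite I" using card by (metis card.infinite not_numeral_le_zero)
    then have "{i, j} \<subset> I" using ij card by (auto simp: psubset_eq card_insert_if split: if_splits)
    moreover have "card {i, j} \<ge> 2" using ij by simp
    ultimately show ?thesis using D by (auto simp: event_D_def)
  qed
  then have "\<omega> (i, j) \<le> max (\<omega> (i, i)) (\<omega> (j, j))"
    using supports_local_eq_pair[of i j ?f] ij f by fastforce
  moreover have "(\<omega> (i, i) + \<omega> (j, j)) / 2 \<le> \<omega> (i, j)"
    using D ij f unfolding event_D_def by (metis less_irrefl)
  ultimately show ?thesis by (simp add: window_def ij)
qed

section \<open>Distributions with non-increasing density\<close>

locale decreasing_density =
  fixes g :: "real \<Rightarrow> real"
  assumes pos: "\<forall>x\<in>{0..1}. g x > 0"
    and nonincr: "\<forall>x y. 0 \<le> x \<longrightarrow> x \<le> y \<longrightarrow> y \<le> 1 \<longrightarrow> g y \<le> g x"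
    and diff: "g differentiable_on {0..1}"
    and total: "integral {0..1} g = 1"
begin

lemma g_nonneg: "0 \<le> x \<Longrightarrow> x \<le> 1 \<Longrightarrow> 0 \<le> g x"
  using pos by (simp add: less_imp_le)

lemma integrable_on_subinterval: "0 \<le> a \<Longrightarrow> b \<le> 1 \<Longrightarrow> g integrable_on {a..b}"
  using differentiable_imp_continuous_on[OF diff]
  by (intro integrable_continuous_interval) (auto elim: continuous_on_subset)

lemma integral_subinterval_nonneg: "0 \<le> a \<Longrightarrow> b \<le> 1 \<Longrightarrow> 0 \<le> integral {a..b} g"
  by (intro integral_nonneg integrable_on_subinterval g_nonneg) auto

lemma integral_subinterval_combine:
  "0 \<le> a \<Longrightarrow> a \<le> c \<Longrightarrow> c \<le> b \<Longrightarrow> b \<le> 1 \<Longrightarrow>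
     integral {a..c} g + integral {c..b} g = integral {a..b} g"
  by (intro Henstock_Kurzweil_Integration.integral_combine integrable_on_subinterval) auto

lemma cdf_bounds: "0 \<le> x \<Longrightarrow> x \<le> 1 \<Longrightarrow> 0 \<le> cdf g x \<and> cdf g x \<le> 1"
  using integral_subinterval_combine[of 0 x 1] integral_subinterval_nonneg[of 0 x]
    integral_subinterval_nonneg[of x 1] total
  by (auto simp: cdf_def)

lemma integral_upper_half_le:
  assumes "0 \<le> a" "a \<le> b" "b \<le> 1"
  shows "integral {(a + b) / 2..b} g \<le> (cdf g b - cdf g a) / 2"
proof -
  define m where "m = (a + b) / 2"
  have m: "a \<le> m" "m \<le> b" "b - m = m - a" using assms by (auto simp: m_def field_simps)
  have "integral {m..b} g \<le> integral {m..b} (\<lambda>_. g m)"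
    using assms m nonincr by (intro integral_le integrable_on_subinterval) auto
  also have "\<dots> = integral {a..m} (\<lambda>_. g m)" using m by simp
  also have "\<dots> \<le> integral {a..m} g"
    using assms m nonincr by (intro integral_le integrable_on_subinterval) auto
  finally have "integral {m..b} g \<le> integral {a..m} g" .
  moreover have "cdf g b - cdf g a = integral {a..m} g + integral {m..b} g"
    using integral_subinterval_combine[of 0 a b] integral_subinterval_combine[of a m b] assms m
    by (simp add: cdf_def)
  ultimately show ?thesis by (simp add: m_def)
qed

lemma integral_window_le:
  assumes "0 \<le> a" "a \<le> 1" "0 \<le> b" "b \<le> 1"
  shows "integral {(a + b) / 2..max a b} g \<le> \<bar>cdf g a - cdf g b\<bar> / 2"
  using integral_upper_half_le[of a b] integral_upper_half_le[of b a] assms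
  by (cases "a \<le> b") (simp_all add: max_def add.commute)

lemma measurable_density: "(\<lambda>x. ennreal (indicator {0..1} x * g x)) \<in> borel_measurable borel"
proof -
  have "(\<lambda>x. indicator {0..1} x *\<^sub>R g x) \<in> borel_measurable borel"
    using differentiable_imp_continuous_on[OF diff]
    by (rule borel_measurable_continuous_on_indicator[rotated]) simp
  then show ?thesis by simp
qed

lemma emeasure_dist_meas_interval:
  assumes "0 \<le> a" "b \<le> 1" "a \<le> b"
  shows "emeasure (dist_meas g) {a..b} = ennreal (integral {a..b} g)"
proof -
  have "emeasure (dist_meas g) {a..b}
          = (\<integral>\<^sup>+ x. ennreal (indicator {0..1} x * g x) * indicator {a..b} x \<partial>lborel)"
    unfolding dist_meas_def using measurable_density by (intro emeasure_density) auto
  also have "\<dots> = (\<integral>\<^sup>+ x. ennreal (indicator {a..b} x * g x) \<partial>lborel)"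
    using assms by (intro nn_integral_cong) (auto simp: indicator_def)
  also have "\<dots> = ennreal (integral {a..b} g)"
    using assms by (intro nn_integral_has_integral_lebesgue integrable_integral
        integrable_on_subinterval g_nonneg) auto
  finally show ?thesis .
qed

lemma prob_space_dist_meas: "prob_space (dist_meas g)"
proof
  have "emeasure (dist_meas g) UNIV = emeasure (dist_meas g) {0..1}"
    unfolding dist_meas_def using measurable_density
    by (simp add: emeasure_density) (auto intro!: nn_integral_cong simp: indicator_def)
  then show "emeasure (dist_meas g) (space (dist_meas g)) = 1"
    using emeasure_dist_meas_interval[of 0 1] total by (simp add: dist_meas_def)
qed

lemma AE_dist_meas_unit_interval: "AE x in dist_meas g. x \<in> {0..1}"
  unfolding dist_meas_def using measurable_density
  by (subst AE_density) (auto simp: indicator_def)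

lemma product_prob_space_dist_meas: "product_prob_space (\<lambda>_ :: 'i. dist_meas g)"
  using prob_space_dist_meas
  by (auto simp: product_prob_space_def product_prob_space_axioms_def product_sigma_finite_def
      intro: prob_space_imp_sigma_finite)

lemma nn_integral_windows_given_diagonal_le:
  assumes "finite I" and diag: "\<And>i. i \<in> I \<Longrightarrow> x (i, i) \<in> {0..1}"
  shows "(\<integral>\<^sup>+ y. (\<Prod>p\<in>less_pairs I. indicator (window x p) (y p))
            \<partial>PiM (less_pairs I) (\<lambda>_. dist_meas g))
           \<le> ennreal (\<Prod>m<card I. 2 * real (Suc m) / 8 ^ m)"
proof -
  interpret product_prob_space "\<lambda>_. dist_meas g" "less_pairs I"
    by (rule product_prob_space_dist_meas)
  define a b where "a p = x (fst p, fst p)" and "b p = x (snd p, snd p)" for p :: "nat \<times> nat"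
  have ab: "a p \<in> {0..1}" "b p \<in> {0..1}" if "p \<in> less_pairs I" for p
    using that diag by (auto simp: a_def b_def less_pairs_def)
  have window: "window x p = {(a p + b p) / 2..max (a p) (b p)}" for p
    by (simp add: window_def a_def b_def)
  have mass: "emeasure (dist_meas g) (window x p) = ennreal (integral (window x p) g)"
    and mass_nonneg: "0 \<le> integral (window x p) g"
    and mass_le: "integral (window x p) g \<le> \<bar>cdf g (a p) - cdf g (b p)\<bar> / 2"
    if "p \<in> less_pairs I" for p
    using ab[OF that] integral_window_le[of "a p" "b p"] unfolding window
    by (auto intro!: emeasure_dist_meas_interval integral_subinterval_nonneg)
  have "(\<integral>\<^sup>+ y. (\<Prod>p\<in>less_pairs I. indicator (window x p) (y p)) \<partial>PiM (less_pairs I) (\<lambda>_. dist_meas g))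
          = (\<Prod>p\<in>less_pairs I. emeasure (dist_meas g) (window x p))"
    using \<open>finite I\<close>
    by (subst product_nn_integral_prod) (auto simp: finite_less_pairs window dist_meas_def)
  also have "\<dots> = ennreal (\<Prod>p\<in>less_pairs I. integral (window x p) g)"
    using mass mass_nonneg by (simp add: prod_ennreal)
  also have "\<dots> \<le> ennreal (\<Prod>p\<in>less_pairs I. \<bar>cdf g (a p) - cdf g (b p)\<bar> / 2)"
    using mass_nonneg mass_le by (intro ennreal_leI prod_mono) auto
  also have "\<dots> \<le> ennreal (\<Prod>m<card I. 2 * real (Suc m) / 8 ^ m)"
  proof (intro ennreal_leI)
    have "(\<lambda>i. cdf g (x (i, i))) ` I \<subseteq> {0..1}" using diag cdf_bounds by auto
    from prod_less_pairs_dist_le[OF \<open>finite I\<close> this]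
    show "(\<Prod>p\<in>less_pairs I. \<bar>cdf g (a p) - cdf g (b p)\<bar> / 2)
            \<le> (\<Prod>m<card I. 2 * real (Suc m) / 8 ^ m)"
      by (simp add: a_def b_def)
  qed
  finally show ?thesis .
qed

lemma nn_integral_windows_le:
  assumes "I \<subseteq> {1..n}"
  shows "(\<integral>\<^sup>+ \<omega>. (\<Prod>p\<in>less_pairs I. indicator (window \<omega> p) (\<omega> p))
            \<partial>PiM (pairs n) (\<lambda>_. dist_meas g))
           \<le> ennreal (\<Prod>m<card I. 2 * real (Suc m) / 8 ^ m)"
proof -
  let ?M = "\<lambda>_ :: nat \<times> nat. dist_meas g"
  define Q where "Q = less_pairs I"
  define A where "A = pairs n - Q"
  define \<Phi> where "\<Phi> \<omega> = (\<Prod>p\<in>Q. indicator (window \<omega> p) (\<omega> p) :: ennreal)" for \<omega>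
  interpret product_prob_space ?M "pairs n"
    by (rule product_prob_space_dist_meas)
  have "finite I" using assms finite_subset by blast
  have "finite (pairs n)"
    by (rule finite_subset[of _ "{1..n} \<times> {1..n}"]) (auto simp: pairs_def)
  moreover have "Q \<subseteq> pairs n" using assms by (auto simp: Q_def less_pairs_def pairs_def)
  ultimately have split: "pairs n = A \<union> Q" "A \<inter> Q = {}" and "finite A" "finite Q"
    using finite_subset by (auto simp: A_def)
  have diag: "(i, i) \<in> A" if "i \<in> I" for i
    using assms that by (auto simp: A_def Q_def less_pairs_def pairs_def)
  have diag_Q: "(fst p, fst p) \<in> A" "(snd p, snd p) \<in> A" if "p \<in> Q" for p
    using that diag by (auto simp: Q_def less_pairs_def)
  have "(\<integral>\<^sup>+ \<omega>. \<Phi> \<omega> \<partial>PiM (pairs n) ?M)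
          = (\<integral>\<^sup>+ x. (\<integral>\<^sup>+ y. \<Phi> (merge A Q (x, y)) \<partial>PiM Q ?M) \<partial>PiM A ?M)"
    unfolding split(1) \<Phi>_def
    using split \<open>finite A\<close> \<open>finite Q\<close> diag_Q
    by (intro product_nn_integral_fold measurable_window_indicator) auto
  also have "\<dots> \<le> (\<integral>\<^sup>+ x. ennreal (\<Prod>m<card I. 2 * real (Suc m) / 8 ^ m) \<partial>PiM A ?M)"
  proof (rule nn_integral_mono_AE)
    have "AE x in PiM A ?M. \<forall>i\<in>I. x (i, i) \<in> {0..1}"
      using \<open>finite I\<close> diag prob_space_dist_meas AE_dist_meas_unit_interval
      by (intro AE_finite_allI AE_PiM_component) auto
    moreover have "\<Phi> (merge A Q (x, y)) = (\<Prod>p\<in>Q. indicator (window x p) (y p))" for x y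
      unfolding \<Phi>_def using split(2) diag_Q
      by (intro prod.cong) (auto simp: merge_def window_def)
    ultimately show "AE x in PiM A ?M. (\<integral>\<^sup>+ y. \<Phi> (merge A Q (x, y)) \<partial>PiM Q ?M)
                       \<le> ennreal (\<Prod>m<card I. 2 * real (Suc m) / 8 ^ m)"
      using nn_integral_windows_given_diagonal_le[OF \<open>finite I\<close>] by (auto simp: Q_def elim!: AE_mp)
  qed
  also have "\<dots> = ennreal (\<Prod>m<card I. 2 * real (Suc m) / 8 ^ m)"
    using prob_space_PiM[OF prob_space_dist_meas, of A] by (simp add: prob_space.emeasure_space_1)
  finally show ?thesis by (simp add: \<Phi>_def Q_def)
qed

lemma prob_event_D_le:
  assumes "I \<subseteq> {1..n}" and "card I \<ge> 3"
  shows "measure (PiM (pairs n) (\<lambda>_. dist_meas g))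
           {\<omega> \<in> space (PiM (pairs n) (\<lambda>_. dist_meas g)). event_D (sym_entry \<omega>) I}
         \<le> (\<Prod>m<card I. 2 * real (Suc m) / 8 ^ m)"
proof -
  let ?P = "PiM (pairs n) (\<lambda>_. dist_meas g)"
  define S where "S = {\<omega> \<in> space ?P. event_D (sym_entry \<omega>) I}"
  have "emeasure ?P S \<le> (\<integral>\<^sup>+ \<omega>. (\<Prod>p\<in>less_pairs I. indicator (window \<omega> p) (\<omega> p)) \<partial>?P)"
  proof (cases "S \<in> sets ?P")
    case True
    have "indicator S \<omega> \<le> (\<Prod>p\<in>less_pairs I. indicator (window \<omega> p) (\<omega> p) :: ennreal)" for \<omega>
      using event_D_imp_window[OF _ assms(2)]
      by (auto simp: indicator_def S_def intro!: prod.neutral)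
    then show ?thesis
      using True by (auto intro: order.trans[OF _ nn_integral_mono] simp flip: nn_integral_indicator)
  qed (simp add: emeasure_notin_sets)
  also have "\<dots> \<le> ennreal (\<Prod>m<card I. 2 * real (Suc m) / 8 ^ m)"
    by (rule nn_integral_windows_le[OF assms(1)])
  finally have "measure ?P S \<le> (\<Prod>m<card I. 2 * real (Suc m) / 8 ^ m)"
    unfolding measure_def by (intro enn2real_leI) (auto intro: prod_nonneg)
  then show ?thesis by (simp add: S_def)
qed

end

theorem lemma2p10:
  fixes g :: "real \<Rightarrow> real"
  assumes pos: "\<forall>x\<in>{0..1}. g x > 0"
    and nonincr: "\<forall>x y. 0 \<le> x \<longrightarrow> x \<le> y \<longrightarrow> y \<le> 1 \<longrightarrow> g y \<le> g x"
    and diff: "g differentiable_on {0..1}"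
    and total: "integral {0..1} g = 1"
    and hazard: "\<forall>x y. 0 \<le> x \<longrightarrow> x \<le> y \<longrightarrow> y < 1 \<longrightarrow>
                   g x / (1 - cdf g x) \<le> g y / (1 - cdf g y)"
  shows "\<exists>\<eta>1 \<eta>2 C :: real. \<exists>N :: nat. \<forall>(n :: nat) (I :: nat set).
           I \<subseteq> {1..n} \<longrightarrow> card I \<ge> N \<longrightarrow>
           measure (PiM (pairs n) (\<lambda>_. dist_meas g))
             {\<omega> \<in> space (PiM (pairs n) (\<lambda>_. dist_meas g)). event_D (sym_entry \<omega>) I}
           \<le> 2 powr (- (3/2) * (real (card I))\<^sup>2) *
              exp (\<eta>1 * real (card I) * ln (real (card I)) + \<eta>2 * real (card I)
                   + C * ln (real (card I)))"
proof -
  interpret decreasing_density g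
    using pos nonincr diff total by unfold_locales
  have "measure (PiM (pairs n) (\<lambda>_. dist_meas g))
          {\<omega> \<in> space (PiM (pairs n) (\<lambda>_. dist_meas g)). event_D (sym_entry \<omega>) I}
        \<le> 2 powr (- (3/2) * (real (card I))\<^sup>2) *
           exp (1 * real (card I) * ln (real (card I)) + 3 * real (card I)
                + 0 * ln (real (card I)))"
    if "I \<subseteq> {1..n}" "card I \<ge> 3" for n I
    using order.trans[OF prob_event_D_le[OF that] prod_vandermonde_bound_le[of "card I"]] that
    by simp
  then show ?thesis by blast
qed

end
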